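(* Let $n\ge1$, $\varepsilon\in D$, $s\in D^n$, and let $\mu^{(n)}$, $e_n$ and $n'$ be as in the recursive construction below. If $g\in D[x]$ is zero or satisfies $\deg g\le -e_n$, then $\mu^{(n)}+g\,\mu^{(n')}\in\mathrm{Min}(s)$. In particular, if $e_n\le 0$ then $s$ has more than one minimal polynomial, i.e. $|\mathrm{Min}(s)|>1$.
   Context: Let $D$ be a commutative integral domain with $1\neq 0$. For $s=(s_1,\dots,s_n)\in D^n$ put $\underline{s}=s_1x^{-1}+\cdots+s_nx^{-n}\in D[x,x^{-1}]$; for a Laurent polynomial $F$, $F_k$ is the coefficient of $x^k$; $s^{(i)}=(s_1,\dots,s_i)$. A polynomial $f\in D[x]$ is an annihilator of $s$ if $f=0$, or $d=\deg f\ge0$ and $(f\cdot\underline{s})_{d-j}=0$ for $d+1\le j\le n$. $\mathrm{Min}(s)$ is the set of nonzero annihilators of least degree. For nonzero $f\in D[x]$ and $t\in D^m$, $\Delta(f,t)=(f\cdot\underline{t})_{\deg f-m}$. Recursive construction (relative to a fixed $\varepsilon\in D$): put $\mu^{(-1)}=\varepsilon$, $\mu^{(0)}=1$, $\Delta_0=1$, $0'=-1$, and for $j\ge 0$ let $e_j=j+1-2\deg\mu^{(j)}$ (so $e_0=1$). For $j=1,\dots,n$ successively define: $\Delta_j=\Delta(\mu^{(j-1)},s^{(j)})$; the index $j'=(j-1)'$ if $\Delta_j=0$ or $e_{j-1}\le 0$, and $j'=j-1$ if $\Delta_j\neq0$ and $e_{j-1}>0$; $\Delta'_j=\Delta_{(j-1)'+1}$;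 and $\mu^{(j)}=\mu^{(j-1)}$ if $\Delta_j=0$, otherwise $\mu^{(j)}=\Delta'_j\,x^{\max\{e_{j-1},0\}}\mu^{(j-1)}-\Delta_j\,x^{\max\{-e_{j-1},0\}}\mu^{((j-1)')}$. *)

theory Defs
  imports "HOL-Computational_Algebra.Polynomial"
begin

text \<open>A sequence s in D^n is represented by a function s :: nat => 'a together with
  the length n; only the values s 1, ..., s n are relevant.
  The prefix s^(i) is represented by the same function with length i.\<close>

text \<open>Coefficient of x^k in the Laurent polynomial f * (s_1 x^-1 + ... + s_n x^-n).\<close>
definition lcoef :: "(nat \<Rightarrow> 'a::comm_ring_1) \<Rightarrow> nat \<Rightarrow> 'a poly \<Rightarrow> int \<Rightarrow> 'a" where
  "lcoef s n f k = (\<Sum>i\<le>degree f. coeff f i *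
      (if 1 \<le> int i - k \<and> int i - k \<le> int n then s (nat (int i - k)) else 0))"

definition annihilator :: "(nat \<Rightarrow> 'a::comm_ring_1) \<Rightarrow> nat \<Rightarrow> 'a poly \<Rightarrow> bool" where
  "annihilator s n f \<longleftrightarrow> f = 0 \<or>
     (\<forall>j. degree f + 1 \<le> j \<and> j \<le> n \<longrightarrow> lcoef s n f (int (degree f) - int j) = 0)"

definition MinPolys :: "(nat \<Rightarrow> 'a::comm_ring_1) \<Rightarrow> nat \<Rightarrow> 'a poly set" where
  "MinPolys s n = {f. f \<noteq> 0 \<and> annihilator s n f \<and>
       (\<forall>h. h \<noteq> 0 \<and> annihilator s n h \<longrightarrow> degree f \<le> degree h)}"

definition Discr :: "'a::comm_ring_1 poly \<Rightarrow> (nat \<Rightarrow> 'a) \<Rightarrow> nat \<Rightarrow> 'a" where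
  "Discr f s m = lcoef s m f (int (degree f) - int m)"

text \<open>State after step j of the recursive construction:
  (mu^(j), mu^(j'), Delta_(j'+1), j').  Initially (j = 0): (1, eps, Delta_0 = 1, 0' = -1).\<close>
fun bm_state :: "(nat \<Rightarrow> 'a::comm_ring_1) \<Rightarrow> 'a \<Rightarrow> nat \<Rightarrow> 'a poly \<times> 'a poly \<times> 'a \<times> int" where
  "bm_state s eps 0 = (1, [:eps:], 1, -1)"
| "bm_state s eps (Suc k) =
     (let (mu, mup, Dp, jp) = bm_state s eps k;
          j = Suc k;
          Dj = Discr mu s j;
          e = int k + 1 - 2 * int (degree mu)
      in if Dj = 0 then (mu, mup, Dp, jp)
         else if e > 0 then
           (smult Dp (monom 1 (nat e) * mu) - smult Dj mup, mu, Dj, int k)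
         else
           (smult Dp mu - smult Dj (monom 1 (nat (- e)) * mup), mup, Dp, jp))"

definition bm_mu :: "(nat \<Rightarrow> 'a::comm_ring_1) \<Rightarrow> 'a \<Rightarrow> nat \<Rightarrow> 'a poly" where
  "bm_mu s eps j = fst (bm_state s eps j)"

definition bm_mu_int :: "(nat \<Rightarrow> 'a::comm_ring_1) \<Rightarrow> 'a \<Rightarrow> int \<Rightarrow> 'a poly" where
  "bm_mu_int s eps j = (if j < 0 then [:eps:] else bm_mu s eps (nat j))"

definition bm_jprime :: "(nat \<Rightarrow> 'a::comm_ring_1) \<Rightarrow> 'a \<Rightarrow> nat \<Rightarrow> int" where
  "bm_jprime s eps j = snd (snd (snd (bm_state s eps j)))"

definition bm_e :: "(nat \<Rightarrow> 'a::comm_ring_1) \<Rightarrow> 'a \<Rightarrow> nat \<Rightarrow> int" where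
  "bm_e s eps j = int j + 1 - 2 * int (degree (bm_mu s eps j))"

end

theory Submission
  imports Defs
begin

(* Extend s by zero outside 1..n and write [f|m] = sum_i f_i s_(i+m); this is the
   coefficient of x^(-m) in f * (sum_(i>=1) s_i x^(-i)).  Then f annihilates s^(n) iff
   [f|t - deg f] = 0 for deg f < t <= n, and Delta(f, s^(j)) = [f|j - deg f].
   The key fact is Massey's bound: if f annihilates s^(k) but not s^(k+1),
   every nonzero annihilator h of s^(k+1) has deg f + deg h >= k + 1.
   By induction on j we then show an invariant of the construction: mu^(j) is a minimal
   polynomial of s^(j), mu^(j') annihilates s^(j') with Delta_(j'+1) = [mu^(j')|j'+1-deg]
   and deg mu^(j) + deg mu^(j') = j' + 1.  Finally, adding g * mu^(n') with
   deg g <= -e_n to mu^(n) keeps the degree and the annihilation property, which gives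
   the first claim; for e_n <= 0 the choices g = 0 and g = 1 give two minimal polynomials. *)

definition seq_val :: "(nat \<Rightarrow> 'a::comm_ring_1) \<Rightarrow> int \<Rightarrow> 'a" where
  "seq_val s m = (if 1 \<le> m then s (nat m) else 0)"

definition series_coeff :: "(nat \<Rightarrow> 'a::comm_ring_1) \<Rightarrow> 'a poly \<Rightarrow> int \<Rightarrow> 'a" where
  "series_coeff s f m = (\<Sum>i\<le>degree f. coeff f i * seq_val s (int i + m))"

definition annihilates :: "(nat \<Rightarrow> 'a::comm_ring_1) \<Rightarrow> nat \<Rightarrow> 'a poly \<Rightarrow> bool" where
  "annihilates s n f \<longleftrightarrow>
     (\<forall>t. degree f < t \<and> t \<le> n \<longrightarrow> series_coeff s f (int t - int (degree f)) = 0)"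

lemma series_coeff_bound:
  "degree f \<le> N \<Longrightarrow> series_coeff s f m = (\<Sum>i\<le>N. coeff f i * seq_val s (int i + m))"
  unfolding series_coeff_def by (rule sum.mono_neutral_left) (auto simp: coeff_eq_0)

lemma series_coeff_0 [simp]: "series_coeff s 0 m = 0"
  by (simp add: series_coeff_def)

lemma series_coeff_add: "series_coeff s (p + q) m = series_coeff s p m + series_coeff s q m"
  using degree_add_le_max[of p q]
  by (simp add: series_coeff_bound[of _ "max (degree p) (degree q)"] sum.distrib algebra_simps)

lemma series_coeff_diff: "series_coeff s (p - q) m = series_coeff s p m - series_coeff s q m"
  using degree_diff_le_max[of p q]
  by (simp add: series_coeff_bound[of _ "max (degree p) (degree q)"] sum_subtractf algebra_simps)

lemma series_coeff_smult: "series_coeff s (smult c p) m = c * series_coeff s p m"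
  using degree_smult_le[of c p]
  by (simp add: series_coeff_bound[of _ "degree p"] sum_distrib_left algebra_simps)

lemma series_coeff_pCons:
  "series_coeff s (pCons a p) m = a * seq_val s m + series_coeff s p (m + 1)"
proof -
  have "series_coeff s (pCons a p) m =
          (\<Sum>i\<le>Suc (degree p). coeff (pCons a p) i * seq_val s (int i + m))"
    by (rule series_coeff_bound) (simp add: degree_pCons_le)
  also have "\<dots> = a * seq_val s m + (\<Sum>i\<le>degree p. coeff p i * seq_val s (int i + (m + 1)))"
    by (subst sum.atMost_Suc_shift) (simp add: algebra_simps)
  finally show ?thesis by (simp add: series_coeff_def)
qed

lemma series_coeff_monom_mult: "series_coeff s (monom 1 k * p) m = series_coeff s p (m + int k)"
proof (induction k arbitrary: m)
  case 0
  then show ?case by simp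
next
  case (Suc k)
  have "monom 1 (Suc k) * p = pCons 0 (monom 1 k * p)" by (simp add: monom_Suc)
  then show ?case using Suc by (simp add: series_coeff_pCons algebra_simps)
qed

lemma series_coeff_mult_eq_0:
  "(\<And>k. k \<le> degree g \<Longrightarrow> series_coeff s p (m + int k) = 0) \<Longrightarrow> series_coeff s (g * p) m = 0"
proof (induction g arbitrary: m)
  case 0
  then show ?case by simp
next
  case (pCons a g)
  show ?case
  proof (cases "g = 0")
    case True
    then show ?thesis using pCons.prems[of 0] by (simp add: series_coeff_smult)
  next
    case False
    then have "series_coeff s (g * p) (m + 1) = 0"
      using pCons.IH[of "m + 1"] pCons.prems[of "Suc _"] by (simp add: algebra_simps)
    then show ?thesis
      using pCons.prems[of 0] by (simp add: series_coeff_smult series_coeff_add series_coeff_pCons)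
  qed
qed

text \<open>Both sides equal the double sum of h_k f_i s_(i+k+c).\<close>
lemma series_coeff_pairing:
  "(\<Sum>k\<le>degree h. coeff h k * series_coeff s f (int k + c)) =
   (\<Sum>i\<le>degree f. coeff f i * series_coeff s h (int i + c))"
proof -
  have "(\<Sum>k\<le>degree h. coeff h k * series_coeff s f (int k + c)) =
     (\<Sum>k\<le>degree h. \<Sum>i\<le>degree f. coeff h k * coeff f i * seq_val s (int i + int k + c))"
    by (simp add: series_coeff_def sum_distrib_left algebra_simps)
  also have "\<dots> = (\<Sum>i\<le>degree f. \<Sum>k\<le>degree h. coeff h k * coeff f i * seq_val s (int i + int k + c))"
    by (rule sum.swap)
  also have "\<dots> = (\<Sum>i\<le>degree f. coeff f i * series_coeff s h (int i + c))"
    by (simp add: series_coeff_def sum_distrib_left algebra_simps)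
  finally show ?thesis .
qed

lemma lcoef_eq_series_coeff:
  "int (degree f) - int n \<le> k \<Longrightarrow> lcoef s n f k = series_coeff s f (- k)"
  unfolding lcoef_def series_coeff_def seq_val_def by (rule sum.cong) auto

lemma Discr_eq_series_coeff: "Discr f s j = series_coeff s f (int j - int (degree f))"
  unfolding Discr_def by (subst lcoef_eq_series_coeff) auto

lemma annihilator_iff: "annihilator s n f \<longleftrightarrow> f = 0 \<or> annihilates s n f"
  unfolding annihilator_def annihilates_def by (auto simp: lcoef_eq_series_coeff)

lemma MinPolys_iff:
  "f \<in> MinPolys s n \<longleftrightarrow> f \<noteq> 0 \<and> annihilates s n f \<and>
     (\<forall>h. h \<noteq> 0 \<longrightarrow> annihilates s n h \<longrightarrow> degree f \<le> degree h)"
  unfolding MinPolys_def by (auto simp: annihilator_iff)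

lemma annihilates_mono: "m \<le> n \<Longrightarrow> annihilates s n f \<Longrightarrow> annihilates s m f"
  by (simp add: annihilates_def)

text \<open>Massey's degree bound: if f annihilates s^(k) but not s^(k+1), then any nonzero
  annihilator h of s^(k+1) satisfies deg f + deg h >= k + 1.  Otherwise, for
  c = k + 1 - deg f - deg h >= 1, the pairing identity compares a sum that vanishes
  because h annihilates s^(k+1) with one that reduces to lc(h) times the discrepancy of f.\<close>
lemma massey_degree_bound:
  fixes f h :: "'a::idom poly"
  assumes af: "annihilates s k f"
    and discr: "series_coeff s f (int (Suc k) - int (degree f)) \<noteq> 0"
    and hnz: "h \<noteq> 0" and ah: "annihilates s (Suc k) h"
  shows "Suc k \<le> degree f + degree h"
proof (rule ccontr)
  assume "\<not> Suc k \<le> degree f + degree h"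
  define c where "c = int (Suc k) - int (degree f) - int (degree h)"
  have c_pos: "c \<ge> 1" using \<open>\<not> Suc k \<le> degree f + degree h\<close> by (simp add: c_def)
  have h_side: "series_coeff s h (int i + c) = 0" if "i \<le> degree f" for i
  proof -
    have "degree h < nat (int i + c + int (degree h)) \<and> nat (int i + c + int (degree h)) \<le> Suc k"
      using that c_pos by (auto simp: c_def)
    then show ?thesis using ah c_pos unfolding annihilates_def by fastforce
  qed
  have f_side: "series_coeff s f (int i + c) = 0" if "i < degree h" for i
  proof -
    have "degree f < nat (int i + c + int (degree f)) \<and> nat (int i + c + int (degree f)) \<le> k"
      using that c_pos by (auto simp: c_def)
    then show ?thesis using af c_pos unfolding annihilates_def by fastforce
  qed
  have "0 = (\<Sum>i\<le>degree f. coeff f i * series_coeff s h (int i + c))"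
    using h_side by simp
  also have "\<dots> = (\<Sum>i\<le>degree h. coeff h i * series_coeff s f (int i + c))"
    by (rule series_coeff_pairing[symmetric])
  also have "\<dots> = coeff h (degree h) * series_coeff s f (int (degree h) + c)"
    using f_side by (simp add: lessThan_Suc_atMost[symmetric])
  also have "\<dots> = lead_coeff h * series_coeff s f (int (Suc k) - int (degree f))"
    by (simp add: c_def algebra_simps)
  finally show False using hnz discr by simp
qed

text \<open>For shifts a, b with a - b = e_k = k + 1 - 2 deg mu, the combination
  Dp x^a mu - Dj x^b mup has degree deg mu + a and annihilates s^(k+1): its discrepancies
  at t <= k vanish termwise, and at t = k + 1 the two terms are Dp Dj and Dj Dp.\<close>
lemma bm_update:
  fixes mu mup :: "'a::idom poly" and a b :: nat
  assumes munz: "mu \<noteq> 0" and amu: "annihilates s k mu" and Dpnz: "Dp \<noteq> 0"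
    and jpk: "jp \<le> int k - 1"
    and dsum: "int (degree mu) + int (degree mup) = jp + 1"
    and mup: "0 \<le> jp \<longrightarrow>
      annihilates s (nat jp) mup \<and> series_coeff s mup (jp + 1 - int (degree mup)) = Dp"
    and Dj: "Dj = series_coeff s mu (int (Suc k) - int (degree mu))"
    and ab: "int a - int b = int k + 1 - 2 * int (degree mu)"
  defines "nu \<equiv> smult Dp (monom 1 a * mu) - smult Dj (monom 1 b * mup)"
  shows "degree nu = degree mu + a" "nu \<noteq> 0" "annihilates s (Suc k) nu"
proof -
  let ?A = "smult Dp (monom 1 a * mu)" and ?B = "smult Dj (monom 1 b * mup)"
  have deg_A: "degree ?A = degree mu + a"
    using Dpnz munz by (simp add: degree_mult_eq degree_monom_eq)
  have "degree ?B \<le> degree (monom (1::'a) b * mup)" by (rule degree_smult_le)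
  also have "\<dots> \<le> b + degree mup"
    using degree_mult_le[of "monom (1::'a) b" mup] by (simp add: degree_monom_eq)
  finally have deg_B: "int (degree ?B) + (int k - jp) \<le> int (degree mu + a)"
    using ab dsum by linarith
  then have "degree ?B < degree ?A" using deg_A jpk by linarith
  then have deg_nu: "degree nu = degree ?A"
    unfolding nu_def using degree_add_eq_left[of "- ?B" ?A] by simp
  then show deg: "degree nu = degree mu + a" using deg_A by simp
  show "nu \<noteq> 0"
    using deg_nu \<open>degree ?B < degree ?A\<close> by (auto simp: nu_def)
  show "annihilates s (Suc k) nu"
    unfolding annihilates_def
  proof (intro allI impI)
    fix t assume t: "degree nu < t \<and> t \<le> Suc k"
    define t' where "t' = int t - int k + jp"
    have jp0: "0 \<le> jp" using t deg deg_B ab dsum by linarith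
    have mup_ann: "annihilates s (nat jp) mup"
      and mup_discr: "series_coeff s mup (jp + 1 - int (degree mup)) = Dp"
      using mup jp0 by auto
    have "series_coeff s nu m =
        Dp * series_coeff s mu (m + int a) - Dj * series_coeff s mup (m + int b)" for m
      unfolding nu_def by (simp add: series_coeff_diff series_coeff_smult series_coeff_monom_mult)
    moreover have "int t - int (degree nu) + int a = int t - int (degree mu)"
      and "int t - int (degree nu) + int b = t' - int (degree mup)"
      using deg ab dsum by (simp_all add: t'_def)
    ultimately have "series_coeff s nu (int t - int (degree nu)) =
        Dp * series_coeff s mu (int t - int (degree mu)) -
        Dj * series_coeff s mup (t' - int (degree mup))"
      by metis
    also have "\<dots> = 0"
    proof (cases "t = Suc k")
      case True
      then show ?thesis using Dj mup_discr by (simp add: t'_def algebra_simps)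
    next
      case False
      have t'_range: "degree mup < nat t' \<and> nat t' \<le> nat jp" and t'_int: "int (nat t') = t'"
        using t False deg ab dsum unfolding t'_def by linarith+
      have "series_coeff s mu (int t - int (degree mu)) = 0"
        using amu t False deg unfolding annihilates_def by simp
      moreover have "series_coeff s mup (t' - int (degree mup)) = 0"
        using mup_ann t'_range t'_int unfolding annihilates_def by metis
      ultimately show ?thesis by simp
    qed
    finally show "series_coeff s nu (int t - int (degree nu)) = 0" .
  qed
qed

lemma annihilator_degree_lower_bound:
  fixes mu h :: "'a::idom poly"
  assumes amu: "annihilates s k mu"
    and minimal: "\<And>h. h \<noteq> 0 \<Longrightarrow> annihilates s k h \<Longrightarrow> degree mu \<le> degree h"
    and discr: "series_coeff s mu (int (Suc k) - int (degree mu)) \<noteq> 0"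
    and hnz: "h \<noteq> 0" and ah: "annihilates s (Suc k) h"
  shows "max (degree mu) (Suc k - degree mu) \<le> degree h"
  using minimal[OF hnz annihilates_mono[OF _ ah]] massey_degree_bound[OF amu discr hnz ah]
  by simp

definition bm_invariant ::
    "(nat \<Rightarrow> 'a::idom) \<Rightarrow> 'a \<Rightarrow> nat \<Rightarrow> 'a poly \<times> 'a poly \<times> 'a \<times> int \<Rightarrow> bool" where
  "bm_invariant s eps k st \<longleftrightarrow> (case st of (mu, mup, Dp, jp) \<Rightarrow>
     mu \<noteq> 0 \<and> annihilates s k mu \<and>
     (\<forall>h. h \<noteq> 0 \<longrightarrow> annihilates s k h \<longrightarrow> degree mu \<le> degree h) \<and>
     Dp \<noteq> 0 \<and> jp \<le> int k - 1 \<and> int (degree mu) + int (degree mup) = jp + 1 \<and>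
     mup = bm_mu_int s eps jp \<and>
     (0 \<le> jp \<longrightarrow>
        annihilates s (nat jp) mup \<and> series_coeff s mup (jp + 1 - int (degree mup)) = Dp))"

text \<open>When the discrepancy is
  nonzero, the updated polynomial has degree max(deg mu, k + 1 - deg mu), which by the
  lower bound above is the least possible degree for s^(k+1).\<close>
lemma bm_invariant_Suc:
  fixes s :: "nat \<Rightarrow> 'a::idom"
  assumes inv: "bm_invariant s eps k (bm_state s eps k)"
  shows "bm_invariant s eps (Suc k) (bm_state s eps (Suc k))"
proof -
  obtain mu mup Dp jp where st: "bm_state s eps k = (mu, mup, Dp, jp)"
    by (cases "bm_state s eps k") auto
  from inv st have munz: "mu \<noteq> 0" and amu: "annihilates s k mu" and Dpnz: "Dp \<noteq> 0"
    and minimal: "\<And>h. h \<noteq> 0 \<Longrightarrow> annihilates s k h \<Longrightarrow> degree mu \<le> degree h"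
    and jpk: "jp \<le> int k - 1" and dsum: "int (degree mu) + int (degree mup) = jp + 1"
    and mup_eq: "mup = bm_mu_int s eps jp"
    and mup: "0 \<le> jp \<longrightarrow>
      annihilates s (nat jp) mup \<and> series_coeff s mup (jp + 1 - int (degree mup)) = Dp"
    by (auto simp: bm_invariant_def)
  define Dj where "Dj = series_coeff s mu (int (Suc k) - int (degree mu))"
  define e where "e = int k + 1 - 2 * int (degree mu)"
  have step: "bm_state s eps (Suc k) =
     (if Dj = 0 then (mu, mup, Dp, jp)
      else if e > 0 then (smult Dp (monom 1 (nat e) * mu) - smult Dj (monom 1 0 * mup), mu, Dj, int k)
      else (smult Dp (monom 1 0 * mu) - smult Dj (monom 1 (nat (- e)) * mup), mup, Dp, jp))"
    by (simp add: st Dj_def e_def Let_def Discr_eq_series_coeff)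
  have lower: "max (degree mu) (Suc k - degree mu) \<le> degree h"
    if "Dj \<noteq> 0" "h \<noteq> 0" "annihilates s (Suc k) h" for h
    using annihilator_degree_lower_bound[OF amu minimal _ that(2,3)] that(1) by (simp add: Dj_def)
  consider "Dj = 0" | "Dj \<noteq> 0" "e > 0" | "Dj \<noteq> 0" "\<not> e > 0" by blast
  then show ?thesis
  proof cases
    case 1
    then have "annihilates s (Suc k) mu"
      using amu by (auto simp: annihilates_def Dj_def le_Suc_eq)
    moreover have "degree mu \<le> degree h" if "h \<noteq> 0" "annihilates s (Suc k) h" for h
      using minimal[OF that(1) annihilates_mono[OF _ that(2)]] by simp
    ultimately show ?thesis
      using 1 step munz Dpnz jpk dsum mup_eq mup
      by (simp add: bm_invariant_def)
  next
    case 2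
    define nu where "nu = smult Dp (monom 1 (nat e) * mu) - smult Dj (monom 1 0 * mup)"
    have "int (nat e) - int 0 = int k + 1 - 2 * int (degree mu)" using 2 by (simp add: e_def)
    note upd = bm_update[OF munz amu Dpnz jpk dsum mup Dj_def this, folded nu_def]
    have deg_nu: "int (degree nu) + int (degree mu) = int k + 1"
      using upd(1) 2 by (simp add: e_def)
    have "degree nu \<le> degree h" if "h \<noteq> 0" "annihilates s (Suc k) h" for h
      using lower[OF 2(1) that] deg_nu by linarith
    moreover have "bm_mu_int s eps (int k) = mu"
      using st by (simp add: bm_mu_int_def bm_mu_def)
    moreover have "series_coeff s mu (int k + 1 - int (degree mu)) = Dj"
      by (simp add: Dj_def algebra_simps)
    moreover have "bm_state s eps (Suc k) = (nu, mu, Dj, int k)"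
      using 2 step by (simp add: nu_def)
    ultimately show ?thesis
      using 2 upd(2,3) deg_nu amu by (simp add: bm_invariant_def)
  next
    case 3
    define nu where "nu = smult Dp (monom 1 0 * mu) - smult Dj (monom 1 (nat (- e)) * mup)"
    have "int 0 - int (nat (- e)) = int k + 1 - 2 * int (degree mu)" using 3 by (simp add: e_def)
    note upd = bm_update[OF munz amu Dpnz jpk dsum mup Dj_def this, folded nu_def]
    have "degree nu \<le> degree h" if "h \<noteq> 0" "annihilates s (Suc k) h" for h
      using lower[OF 3(1) that] upd(1) by simp
    moreover have "bm_state s eps (Suc k) = (nu, mup, Dp, jp)"
      using 3 step by (simp add: nu_def)
    ultimately show ?thesis
      using upd Dpnz jpk dsum mup_eq mup by (simp add: bm_invariant_def)
  qed
qed

lemma bm_invariant_0: "bm_invariant s eps 0 (bm_state s eps 0)"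
  by (simp add: bm_invariant_def annihilates_def bm_mu_int_def)

lemma bm_state_invariant: "bm_invariant s eps k (bm_state s eps k)"
  by (induction k) (use bm_invariant_0 bm_invariant_Suc in auto)

text \<open>Perturbing an annihilator mu of s^(n) by g * mup, where mup annihilates a shorter
  prefix s^(jp) with deg mu + deg mup = jp + 1 and deg g + n + 1 <= 2 deg mu, keeps the
  degree and the annihilation property: every discrepancy of g * mup at t <= n is a
  combination of discrepancies of mup that lie inside s^(jp).\<close>
lemma annihilates_perturbation:
  fixes mu mup g :: "'a::comm_ring_1 poly"
  assumes amu: "annihilates s n mu" and amup: "annihilates s jp mup"
    and dsum: "degree mu + degree mup = jp + 1" and jpn: "jp < n"
    and dg: "degree g + n + 1 \<le> 2 * degree mu"
  shows "degree (mu + g * mup) = degree mu" "annihilates s n (mu + g * mup)"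
proof -
  have "degree (g * mup) \<le> degree g + degree mup" by (rule degree_mult_le)
  then have "degree (g * mup) < degree mu" using dsum jpn dg by linarith
  then show deg: "degree (mu + g * mup) = degree mu" by (rule degree_add_eq_left)
  show "annihilates s n (mu + g * mup)"
    unfolding annihilates_def deg
  proof (intro allI impI)
    fix t assume t: "degree mu < t \<and> t \<le> n"
    have "series_coeff s (g * mup) (int t - int (degree mu)) = 0"
    proof (rule series_coeff_mult_eq_0)
      fix k assume k: "k \<le> degree g"
      define t' where "t' = t - degree mu + k + degree mup"
      have "degree mup < t' \<and> t' \<le> jp" using t k dsum dg unfolding t'_def by linarith
      then have "series_coeff s mup (int t' - int (degree mup)) = 0"
        using amup unfolding annihilates_def by blast
      moreover have "int t' - int (degree mup) = int t - int (degree mu) + int k"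
        using t unfolding t'_def by linarith
      ultimately show "series_coeff s mup (int t - int (degree mu) + int k) = 0" by simp
    qed
    moreover have "series_coeff s mu (int t - int (degree mu)) = 0"
      using amu t unfolding annihilates_def by blast
    ultimately show "series_coeff s (mu + g * mup) (int t - int (degree mu)) = 0"
      by (simp add: series_coeff_add)
  qed
qed

lemma bm_minimal_family:
  fixes g :: "'a::idom poly"
  assumes inv: "bm_invariant s eps n (mu, mup, Dp, jp)"
    and g: "g = 0 \<or> int (degree g) + int n + 1 \<le> 2 * int (degree mu)"
  shows "mu + g * mup \<in> MinPolys s n"
proof -
  from inv have munz: "mu \<noteq> 0" and amu: "annihilates s n mu"
    and minimal: "\<forall>h. h \<noteq> 0 \<longrightarrow> annihilates s n h \<longrightarrow> degree mu \<le> degree h"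
    and jpn: "jp \<le> int n - 1" and dsum: "int (degree mu) + int (degree mup) = jp + 1"
    and mup: "0 \<le> jp \<longrightarrow> annihilates s (nat jp) mup"
    by (auto simp: bm_invariant_def)
  show ?thesis
  proof (cases "g = 0")
    case True
    then show ?thesis using munz amu minimal by (simp add: MinPolys_iff)
  next
    case False
    then have dg: "degree g + n + 1 \<le> 2 * degree mu" using g by linarith
    then have "0 \<le> jp" using dsum by linarith
    then have "annihilates s (nat jp) mup" "degree mu + degree mup = nat jp + 1" "nat jp < n"
      using mup dsum jpn by auto
    note perturbed = annihilates_perturbation[OF amu this dg]
    moreover have "mu + g * mup \<noteq> 0" using perturbed(1) dg by auto
    ultimately show ?thesis using minimal by (simp add: MinPolys_iff)
  qed
qed

theorem mainTheorem7:
  fixes s :: "nat \<Rightarrow> 'a::idom" and eps :: 'a and n :: nat and g :: "'a poly"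
  assumes "n \<ge> 1"
  shows "((g = 0 \<or> int (degree g) \<le> - bm_e s eps n) \<longrightarrow>
            bm_mu s eps n + g * bm_mu_int s eps (bm_jprime s eps n) \<in> MinPolys s n)
       \<and> (bm_e s eps n \<le> 0 \<longrightarrow>
            (\<exists>f h. f \<in> MinPolys s n \<and> h \<in> MinPolys s n \<and> f \<noteq> h))"
proof -
  obtain mu mup Dp jp where st: "bm_state s eps n = (mu, mup, Dp, jp)"
    by (cases "bm_state s eps n") auto
  have inv: "bm_invariant s eps n (mu, mup, Dp, jp)"
    using bm_state_invariant[of s eps n] st by simp
  have state: "bm_mu s eps n = mu" "bm_mu_int s eps (bm_jprime s eps n) = mup"
    "bm_e s eps n = int n + 1 - 2 * int (degree mu)"
    using st inv by (simp_all add: bm_mu_def bm_jprime_def bm_e_def bm_invariant_def)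
  have family: "mu + g' * mup \<in> MinPolys s n" if "g' = 0 \<or> int (degree g') \<le> - bm_e s eps n" for g'
    using bm_minimal_family[OF inv] that state(3) by force
  have "mup \<noteq> 0" if "bm_e s eps n \<le> 0"
  proof -
    from inv have "Dp \<noteq> 0" and dsum: "int (degree mu) + int (degree mup) = jp + 1"
      and "0 \<le> jp \<longrightarrow> series_coeff s mup (jp + 1 - int (degree mup)) = Dp"
      by (auto simp: bm_invariant_def)
    moreover have "0 \<le> jp" using that state(3) dsum by linarith
    ultimately show ?thesis by auto
  qed
  then have "bm_e s eps n \<le> 0 \<Longrightarrow> mu + 0 * mup \<noteq> mu + 1 * mup" by simp
  then show ?thesis
    using family[of 0] family[of 1] family[of g] state by fastforce
qed

end
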